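(* For integers $n,m$ and $y=(y_1,y_2,y_3)\in Q$, \[\sum_{r=y_1}^n\sum_{s=y_1+y_2}^m\mathcal{K}_{n,m;r,s}(z/q,w/q;q)\Phi_{r,s;y}(u,v;c,d;z,w;q)=z^{y_1}w^{y_1+y_2}q^{\frac12(y_1^2+y_2^2+y_3^2)-2y_1-y_2}\,\Phi_{n,m;y}(uzq^{y_{12}},vwq^{y_{23}};czq^{y_{12}},dwq^{y_{23}};z,w;q).\]
   Context: $Q=\{y\in\mathbb{Z}^3:y_1+y_2+y_3=0\}$, $y_{ij}:=y_i-y_j$. For $n\in\mathbb{Z}$, $(a;q)_n=(a;q)_\infty/(aq^n;q)_\infty$ ($1/(q;q)_n=0$ for $n<0$). $\mathcal{K}_{n,m;r,s}(z,w;q):=\frac{z^rw^sq^{r^2-rs+s^2}}{(q;q)_{n-r}(q;q)_{m-s}}$. $\Phi_{n,m;y}(z,w;q):=\frac{(zwq;q)_{n+m}}{(q;q)_{n-y_1}(zq;q)_{n-y_2}(zwq;q)_{n-y_3}(q;q)_{m+y_3}(wq;q)_{m+y_2}(zwq;q)_{m+y_1}}$. With $\rho=(1,2,3)$, $\sigma\in S_3$ in one-line notation and $\chi$ the indicator, $\Phi_{n,m}(u,v;c,d;z,w;q):=\sum_{\sigma\in S_3}\operatorname{sgn}(\sigma)(uz)^{\sigma_1-1}(v/d)^{\chi(\sigma_3=1)}(c/u)^{\chi(\sigma_1=3)}(dw)^{3-\sigma_3}\Phi_{n,m;\sigma-\rho}(z/q,w/q;q)$, and \[\Phi_{n,m;y}(u,v;c,d;z,w;q):=\frac{\Phi_{n-y_1,m-y_1-y_2}(u,v;c,d;zq^{y_{12}},wq^{y_{23}};q)}{(z;q)_{y_{12}}(w;q)_{y_{23}}(zw/q;q)_{y_{13}}}.\]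 *)

theory Defs
  imports Complex_Main "HOL-Combinatorics.Permutations"
begin

text \<open>q-Pochhammer symbol for integer n:
  (a;q)_n = (a;q)_inf / (a q^n;q)_inf, i.e. the finite product for n >= 0 and
  1 / prod_{k=1}^{-n} (1 - a q^{-k}) for n < 0.  With the convention x/0 = 0
  this gives 1/(q;q)_n = 0 for n < 0.\<close>
definition qpoch :: "complex \<Rightarrow> complex \<Rightarrow> int \<Rightarrow> complex" where
  "qpoch a q n =
     (if 0 \<le> n then (\<Prod>k<nat n. (1 - a * q ^ k))
      else inverse (\<Prod>k\<in>{1..nat (- n)}. (1 - a * inverse q ^ k)))"

definition Kker :: "int \<Rightarrow> int \<Rightarrow> int \<Rightarrow> int \<Rightarrow> complex \<Rightarrow> complex \<Rightarrow> complex \<Rightarrow> complex" where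
  "Kker n m r s z w q =
     z powi r * w powi s * q powi (r\<^sup>2 - r * s + s\<^sup>2) / (qpoch q q (n - r) * qpoch q q (m - s))"

definition Phi0 :: "int \<Rightarrow> int \<Rightarrow> int \<Rightarrow> int \<Rightarrow> int \<Rightarrow> complex \<Rightarrow> complex \<Rightarrow> complex \<Rightarrow> complex" where
  "Phi0 n m y1 y2 y3 z w q =
     qpoch (z * w * q) q (n + m) /
     (qpoch q q (n - y1) * qpoch (z * q) q (n - y2) * qpoch (z * w * q) q (n - y3) *
      qpoch q q (m + y3) * qpoch (w * q) q (m + y2) * qpoch (z * w * q) q (m + y1))"

text \<open>Phi_{n,m}(u,v;c,d;z,w;q): sum over S_3 (permutations of {1,2,3}, one-line
  notation sigma = (sigma 1, sigma 2, sigma 3)), rho = (1,2,3).\<close>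
definition PhiS :: "int \<Rightarrow> int \<Rightarrow> complex \<Rightarrow> complex \<Rightarrow> complex \<Rightarrow> complex \<Rightarrow> complex \<Rightarrow> complex \<Rightarrow> complex \<Rightarrow> complex" where
  "PhiS n m u v c d z w q =
     (\<Sum>\<sigma>\<in>{\<sigma>::int \<Rightarrow> int. \<sigma> permutes {1,2,3}}.
        of_int (sign \<sigma>) * (u * z) ^ nat (\<sigma> 1 - 1)
        * (if \<sigma> 3 = 1 then v / d else 1)
        * (if \<sigma> 1 = 3 then c / u else 1)
        * (d * w) ^ nat (3 - \<sigma> 3)
        * Phi0 n m (\<sigma> 1 - 1) (\<sigma> 2 - 2) (\<sigma> 3 - 3) (z / q) (w / q) q)"

definition PhiY :: "int \<Rightarrow> int \<Rightarrow> int \<Rightarrow> int \<Rightarrow> int \<Rightarrow> complex \<Rightarrow> complex \<Rightarrow> complex \<Rightarrow> complex \<Rightarrow> complex \<Rightarrow> complex \<Rightarrow> complex \<Rightarrow> complex" where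
  "PhiY n m y1 y2 y3 u v c d z w q =
     PhiS (n - y1) (m - y1 - y2) u v c d (z * q powi (y1 - y2)) (w * q powi (y2 - y3)) q /
     (qpoch z q (y1 - y2) * qpoch w q (y2 - y3) * qpoch (z * w / q) q (y1 - y3))"

end

theory Submission
  imports Defs
begin

text \<open>
  For \<open>y = 0\<close> the identity is a finite q-hypergeometric summation. Expanding each
  \<open>\<Phi>\<^sub>r\<^sub>,\<^sub>s\<^sub>;\<^sub>0\<close> by the q-Vandermonde sum in its Gauss form (weights \<open>q^((a-k)(b-k))\<close>)
  and summing over the diagonal index \<open>k\<close> first, the remaining double sum factors into two
  q-Chu--Vandermonde sums; what is left is the q-Vandermonde sum in its power form (weights
  \<open>x^k q^(k(k-1))\<close>), which reassembles \<open>\<Phi>\<^sub>n\<^sub>,\<^sub>m\<^sub>;\<^sub>0\<close>. All three summations are proved by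
  creative telescoping, i.e. by verifying Zeilberger certificates.

  For general \<open>y \<in> Q\<close>, shifting \<open>r, s\<close> by \<open>y\<^sub>1, y\<^sub>1 + y\<^sub>2\<close> and \<open>z, w\<close> by \<open>q^y\<^sub>1\<^sub>2, q^y\<^sub>2\<^sub>3\<close> turns
  \<open>\<Phi>\<^sub>r\<^sub>,\<^sub>s\<^sub>;\<^sub>y\<close> into a \<open>y = 0\<close> term and the kernel into a fixed multiple of the shifted
  kernel. For \<open>y = \<sigma> - \<rho>\<close> that multiple is \<open>z^y\<^sub>1 w^(y\<^sub>1+y\<^sub>2)\<close>, which is exactly the rescaling
  \<open>u, c \<mapsto> uz, cz\<close> and \<open>v, d \<mapsto> vw, dw\<close> of the signed weights of \<open>\<Phi>\<^sub>n\<^sub>,\<^sub>m(u,v;c,d)\<close>; summing over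
  \<open>S\<^sub>3\<close> and applying the same shift once more gives the corollary.
\<close>

section \<open>Finite q-Pochhammer products and creative telescoping\<close>

definition qpoch_nat :: "'a::field \<Rightarrow> 'a \<Rightarrow> nat \<Rightarrow> 'a" where
  "qpoch_nat a q N = (\<Prod>k<N. 1 - a * q ^ k)"

lemma qpoch_nat_0 [simp]: "qpoch_nat a q 0 = 1"
  by (simp add: qpoch_nat_def)

lemma qpoch_nat_Suc: "qpoch_nat a q (Suc N) = qpoch_nat a q N * (1 - a * q ^ N)"
  by (simp add: qpoch_nat_def)

lemma qpoch_nat_add: "qpoch_nat a q (M + N) = qpoch_nat a q M * qpoch_nat (a * q ^ M) q N"
  by (induction N) (simp_all add: qpoch_nat_Suc power_add mult.assoc)

lemma qpoch_nat_nonzero: "(\<And>k. 1 - a * q ^ k \<noteq> 0) \<Longrightarrow> qpoch_nat a q N \<noteq> 0"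
  by (simp add: qpoch_nat_def)

lemma sum_eq_by_creative_telescoping:
  fixes f g :: "nat \<Rightarrow> nat \<Rightarrow> 'a::field" and R c d :: "nat \<Rightarrow> 'a"
  assumes base: "f 0 0 = R 0"
    and telescope: "\<And>b k. b < B \<Longrightarrow> k \<le> b \<Longrightarrow> c b * f (Suc b) k - d b * f b k = g b (Suc k) - g b k"
    and top: "\<And>b. b < B \<Longrightarrow> c b * f (Suc b) (Suc b) = - g b (Suc b)"
    and bottom: "\<And>b. g b 0 = 0"
    and rhs: "\<And>b. b < B \<Longrightarrow> c b * R (Suc b) = d b * R b"
    and c_nonzero: "\<And>b. b < B \<Longrightarrow> c b \<noteq> 0"
  shows "(\<Sum>k\<le>B. f B k) = R B"
proof -
  have "b \<le> B \<Longrightarrow> (\<Sum>k\<le>b. f b k) = R b" for b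
  proof (induction b)
    case 0
    then show ?case by (simp add: base)
  next
    case (Suc b)
    then have b: "b < B" by simp
    have "(\<Sum>k\<le>b. c b * f (Suc b) k - d b * f b k) = (\<Sum>k<Suc b. g b (Suc k) - g b k)"
      by (rule sum.cong) (auto simp: telescope[OF b] less_Suc_eq_le)
    also have "\<dots> = g b (Suc b)"
      by (simp add: sum_lessThan_telescope bottom)
    finally have "(\<Sum>k\<le>b. c b * f (Suc b) k) + c b * f (Suc b) (Suc b) = (\<Sum>k\<le>b. d b * f b k)"
      by (simp add: sum_subtractf top[OF b] diff_eq_eq add.commute)
    then have "c b * (\<Sum>k\<le>Suc b. f (Suc b) k) = d b * (\<Sum>k\<le>b. f b k)"
      by (simp add: sum_distrib_left distrib_left)
    also have "\<dots> = c b * R (Suc b)"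
      using Suc.IH b rhs[OF b] by simp
    finally show ?case
      using c_nonzero[OF b] by simp
  qed
  then show ?thesis by simp
qed

section \<open>Terminating q-Chu--Vandermonde and q-Vandermonde sums\<close>

definition qchu_term :: "'a::field \<Rightarrow> 'a \<Rightarrow> nat \<Rightarrow> nat \<Rightarrow> 'a" where
  "qchu_term t q N i = t ^ i * q ^ (i * i - i) / (qpoch_nat q q (N - i) * qpoch_nat q q i * qpoch_nat t q i)"

definition qchu_cert :: "'a::field \<Rightarrow> 'a \<Rightarrow> nat \<Rightarrow> nat \<Rightarrow> 'a" where
  "qchu_cert t q N i = (if i = 0 then 0 else
     - (q ^ (N + 1 - i) * t ^ i * q ^ (i * i - i)
        / (qpoch_nat q q (i - 1) * qpoch_nat q q (N + 1 - i) * qpoch_nat t q (i - 1))))"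

text \<open>Indices are written as \<open>i + r\<close> (and \<open>k + r + 1 + s\<close> below) so that every truncated
  subtraction in the definitions evaluates symbolically.\<close>

lemma qchu_term_telescopes:
  assumes hq: "\<And>k. 1 - q * q ^ k \<noteq> 0" and ht: "\<And>k. 1 - t * q ^ k \<noteq> 0"
  shows "(1 - q ^ (i + r + 1)) * (1 - t * q ^ (i + r)) * qchu_term t q (i + r + 1) i - qchu_term t q (i + r) i
         = qchu_cert t q (i + r) (i + 1) - qchu_cert t q (i + r) i"
proof (cases i)
  case 0
  have "qpoch_nat q q r \<noteq> 0" "1 - q * q ^ r \<noteq> 0"
    using qpoch_nat_nonzero[OF hq] hq by auto
  then show ?thesis using 0
    by (simp add: qchu_term_def qchu_cert_def qpoch_nat_Suc field_simps)
next
  case (Suc j)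
  have "qpoch_nat q q r \<noteq> 0" "qpoch_nat q q j \<noteq> 0" "qpoch_nat t q j \<noteq> 0"
    "1 - q * q ^ r \<noteq> 0" "1 - q * q ^ j \<noteq> 0" "1 - t * q ^ j \<noteq> 0"
    using qpoch_nat_nonzero[OF hq] qpoch_nat_nonzero[OF ht] hq ht by auto
  moreover have "Suc j + r + 1 - Suc j = Suc r" "Suc j + r - Suc j = r" "Suc j + r + 1 - Suc (Suc j) = r"
    by auto
  ultimately show ?thesis using Suc
    by (simp add: qchu_term_def qchu_cert_def qpoch_nat_Suc del: of_nat_Suc,
        simp add: power_add, simp add: divide_simps, simp add: algebra_simps)
qed

lemma qchu_sum:
  assumes hq: "\<And>k. 1 - q * q ^ k \<noteq> 0" and ht: "\<And>k. 1 - t * q ^ k \<noteq> 0"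
  shows "(\<Sum>i\<le>N. qchu_term t q N i) = 1 / (qpoch_nat q q N * qpoch_nat t q N)"
proof (rule sum_eq_by_creative_telescoping[where c = "\<lambda>N. (1 - q ^ (N + 1)) * (1 - t * q ^ N)"
      and d = "\<lambda>_. 1" and g = "qchu_cert t q"])
  fix N i :: nat assume "i \<le> N"
  then obtain r where "N = i + r" using le_Suc_ex by blast
  then show "(1 - q ^ (N + 1)) * (1 - t * q ^ N) * qchu_term t q (Suc N) i - 1 * qchu_term t q N i
      = qchu_cert t q N (Suc i) - qchu_cert t q N i"
    using qchu_term_telescopes[OF hq ht, of i r] by simp
next
  fix N :: nat
  have "qpoch_nat q q N \<noteq> 0" "qpoch_nat t q N \<noteq> 0" "1 - q * q ^ N \<noteq> 0" "1 - t * q ^ N \<noteq> 0"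
    using qpoch_nat_nonzero[OF hq] qpoch_nat_nonzero[OF ht] hq ht by auto
  then show "(1 - q ^ (N + 1)) * (1 - t * q ^ N) * qchu_term t q (Suc N) (Suc N) = - qchu_cert t q N (Suc N)"
    and "(1 - q ^ (N + 1)) * (1 - t * q ^ N) * (1 / (qpoch_nat q q (Suc N) * qpoch_nat t q (Suc N)))
         = 1 * (1 / (qpoch_nat q q N * qpoch_nat t q N))"
    and "(1 - q ^ (N + 1)) * (1 - t * q ^ N) \<noteq> 0"
    by (simp_all add: qchu_term_def qchu_cert_def qpoch_nat_Suc del: of_nat_Suc)
qed (simp_all add: qchu_term_def qchu_cert_def)

definition vdm_sum :: "'a::field \<Rightarrow> 'a \<Rightarrow> nat \<Rightarrow> nat \<Rightarrow> 'a" where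
  "vdm_sum x q a b = qpoch_nat x q (a + b)
     / (qpoch_nat x q a * qpoch_nat x q b * qpoch_nat q q a * qpoch_nat q q b)"

lemma vdm_sum_commute: "vdm_sum x q a b = vdm_sum x q b a"
  by (simp add: vdm_sum_def mult_ac add.commute)

lemma vdm_sum_Suc:
  assumes hq: "\<And>k. 1 - q * q ^ k \<noteq> 0" and hx: "\<And>k. 1 - x * q ^ k \<noteq> 0"
  shows "(1 - x * q ^ b) * (1 - q ^ (b + 1)) * vdm_sum x q a (Suc b) = (1 - x * q ^ (a + b)) * vdm_sum x q a b"
proof -
  have "qpoch_nat q q b \<noteq> 0" "qpoch_nat x q b \<noteq> 0" "qpoch_nat q q a \<noteq> 0" "qpoch_nat x q a \<noteq> 0"
    "1 - q * q ^ b \<noteq> 0" "1 - x * q ^ b \<noteq> 0"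
    using qpoch_nat_nonzero[OF hq] qpoch_nat_nonzero[OF hx] hq hx by auto
  then show ?thesis
    by (simp add: vdm_sum_def qpoch_nat_Suc mult_ac del: of_nat_Suc)
qed

definition vdm_term_pow :: "'a::field \<Rightarrow> 'a \<Rightarrow> nat \<Rightarrow> nat \<Rightarrow> nat \<Rightarrow> 'a" where
  "vdm_term_pow x q a b k = x ^ k * q ^ (k * k - k)
     / (qpoch_nat q q k * qpoch_nat x q k * qpoch_nat q q (a - k) * qpoch_nat q q (b - k))"

definition vdm_cert_pow :: "'a::field \<Rightarrow> 'a \<Rightarrow> nat \<Rightarrow> nat \<Rightarrow> nat \<Rightarrow> 'a" where
  "vdm_cert_pow x q a b k = (if k = 0 then 0 else
     - (q ^ (b + 1 - k) * x ^ k * q ^ (k * k - k)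
        / (qpoch_nat q q (k - 1) * qpoch_nat x q (k - 1) * qpoch_nat q q (a - k) * qpoch_nat q q (b + 1 - k))))"

definition vdm_term_gauss :: "'a::field \<Rightarrow> 'a \<Rightarrow> nat \<Rightarrow> nat \<Rightarrow> nat \<Rightarrow> 'a" where
  "vdm_term_gauss x q a b k = q ^ ((a - k) * (b - k))
     / (qpoch_nat q q k * qpoch_nat x q k * qpoch_nat q q (a - k) * qpoch_nat q q (b - k))"

definition vdm_cert_gauss :: "'a::field \<Rightarrow> 'a \<Rightarrow> nat \<Rightarrow> nat \<Rightarrow> nat \<Rightarrow> 'a" where
  "vdm_cert_gauss x q a b k = (if k = 0 then 0 else
     - (q ^ ((a + 1 - k) * (b + 1 - k))
        / (qpoch_nat q q (k - 1) * qpoch_nat x q (k - 1) * qpoch_nat q q (a - k) * qpoch_nat q q (b + 1 - k))))"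

lemma vdm_term_pow_telescopes:
  assumes hq: "\<And>k. 1 - q * q ^ k \<noteq> 0" and hx: "\<And>k. 1 - x * q ^ k \<noteq> 0"
  shows "(1 - x * q ^ (k + r)) * (1 - q ^ (k + r + 1)) * vdm_term_pow x q (k + r + 1 + s) (k + r + 1) k
        - (1 - x * q ^ ((k + r + 1 + s) + (k + r))) * vdm_term_pow x q (k + r + 1 + s) (k + r) k
         = vdm_cert_pow x q (k + r + 1 + s) (k + r) (k + 1) - vdm_cert_pow x q (k + r + 1 + s) (k + r) k"
proof (cases k)
  case 0
  have "qpoch_nat q q r \<noteq> 0" "qpoch_nat q q s \<noteq> 0" "qpoch_nat q q (r + 1 + s) \<noteq> 0"
    "1 - q * q ^ r \<noteq> 0" "1 - x * q ^ r \<noteq> 0"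
    using qpoch_nat_nonzero[OF hq] hq hx by auto
  moreover have "r + 1 + s = Suc (r + s)" by simp
  ultimately show ?thesis using 0
    by (simp add: vdm_term_pow_def vdm_cert_pow_def qpoch_nat_Suc del: of_nat_Suc,
        simp add: power_add, simp add: divide_simps, simp add: algebra_simps)
next
  case (Suc j)
  have "qpoch_nat q q r \<noteq> 0" "qpoch_nat q q j \<noteq> 0" "qpoch_nat x q j \<noteq> 0" "qpoch_nat q q s \<noteq> 0"
    "qpoch_nat q q (r + s) \<noteq> 0" "1 - q * q ^ r \<noteq> 0" "1 - q * q ^ j \<noteq> 0" "1 - x * q ^ j \<noteq> 0"
    "1 - q * q ^ (r + s) \<noteq> 0"
    using qpoch_nat_nonzero[OF hq] qpoch_nat_nonzero[OF hx] hq hx by auto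
  moreover have "Suc j + r + 1 + s - Suc j = Suc (r + s)" "Suc j + r + 1 - Suc j = Suc r"
    "Suc j + r - Suc j = r" "Suc j + r + 1 + s - Suc (Suc j) = r + s" "Suc j + r + 1 - Suc (Suc j) = r"
    by auto
  ultimately show ?thesis using Suc
    by (simp add: vdm_term_pow_def vdm_cert_pow_def qpoch_nat_Suc del: of_nat_Suc,
        simp add: power_add, simp add: divide_simps, simp add: algebra_simps)
qed

lemma vdm_term_gauss_telescopes:
  assumes hq: "\<And>k. 1 - q * q ^ k \<noteq> 0" and hx: "\<And>k. 1 - x * q ^ k \<noteq> 0"
  shows "(1 - x * q ^ (k + r)) * (1 - q ^ (k + r + 1)) * vdm_term_gauss x q (k + r + 1 + s) (k + r + 1) k
        - (1 - x * q ^ ((k + r + 1 + s) + (k + r))) * vdm_term_gauss x q (k + r + 1 + s) (k + r) k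
         = vdm_cert_gauss x q (k + r + 1 + s) (k + r) (k + 1) - vdm_cert_gauss x q (k + r + 1 + s) (k + r) k"
proof (cases k)
  case 0
  have "qpoch_nat q q r \<noteq> 0" "qpoch_nat q q s \<noteq> 0" "qpoch_nat q q (r + s) \<noteq> 0"
    "1 - q * q ^ r \<noteq> 0" "1 - x * q ^ r \<noteq> 0" "1 - q * q ^ (r + s) \<noteq> 0"
    using qpoch_nat_nonzero[OF hq] hq hx by auto
  moreover have "r + 1 + s = Suc (r + s)" "r + 1 + s + 1 = Suc (Suc (r + s))" by simp_all
  ultimately show ?thesis using 0
    by (simp add: vdm_term_gauss_def vdm_cert_gauss_def qpoch_nat_Suc del: of_nat_Suc,
        simp add: power_add, simp add: divide_simps, simp add: algebra_simps)
next
  case (Suc j)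
  have "qpoch_nat q q r \<noteq> 0" "qpoch_nat q q j \<noteq> 0" "qpoch_nat x q j \<noteq> 0" "qpoch_nat q q s \<noteq> 0"
    "qpoch_nat q q (r + s) \<noteq> 0" "1 - q * q ^ r \<noteq> 0" "1 - q * q ^ j \<noteq> 0" "1 - x * q ^ j \<noteq> 0"
    "1 - q * q ^ (r + s) \<noteq> 0"
    using qpoch_nat_nonzero[OF hq] qpoch_nat_nonzero[OF hx] hq hx by auto
  moreover have "Suc j + r + 1 + s - Suc j = Suc (r + s)" "Suc j + r + 1 - Suc j = Suc r"
    "Suc j + r - Suc j = r" "Suc j + r + 1 + s - Suc (Suc j) = r + s" "Suc j + r + 1 - Suc (Suc j) = r"
    "Suc j + r + 1 + s + 1 - Suc j = Suc (Suc (r + s))"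
    by auto
  ultimately show ?thesis using Suc
    by (simp add: vdm_term_gauss_def vdm_cert_gauss_def qpoch_nat_Suc del: of_nat_Suc,
        simp add: power_add, simp add: divide_simps, simp add: algebra_simps)
qed

lemma vdm_sum_by_telescoping:
  fixes f g :: "nat \<Rightarrow> nat \<Rightarrow> nat \<Rightarrow> 'a::field"
  assumes hq: "\<And>k. 1 - q * q ^ k \<noteq> 0" and hx: "\<And>k. 1 - x * q ^ k \<noteq> 0"
    and base: "\<And>a. f a 0 0 = vdm_sum x q a 0"
    and telescope: "\<And>k r s. (1 - x * q ^ (k + r)) * (1 - q ^ (k + r + 1)) * f (k + r + 1 + s) (k + r + 1) k
        - (1 - x * q ^ ((k + r + 1 + s) + (k + r))) * f (k + r + 1 + s) (k + r) k
        = g (k + r + 1 + s) (k + r) (k + 1) - g (k + r + 1 + s) (k + r) k"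
    and top: "\<And>b s. (1 - x * q ^ b) * (1 - q ^ (b + 1)) * f (b + 1 + s) (Suc b) (Suc b) = - g (b + 1 + s) b (Suc b)"
    and bottom: "\<And>a b. g a b 0 = 0"
    and commute: "\<And>a b k. f a b k = f b a k"
  shows "(\<Sum>k\<le>min a b. f a b k) = vdm_sum x q a b"
proof -
  have ordered: "(\<Sum>k\<le>b. f a b k) = vdm_sum x q a b" if "b \<le> a" for a b
  proof (rule sum_eq_by_creative_telescoping[where B = b and c = "\<lambda>b. (1 - x * q ^ b) * (1 - q ^ (b + 1))"
        and d = "\<lambda>b. 1 - x * q ^ (a + b)" and g = "g a"])
    fix b' k :: nat assume "b' < b" "k \<le> b'"
    then have "b' = k + (b' - k)" "a = k + (b' - k) + 1 + (a - b' - 1)"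
      using that by auto
    then show "(1 - x * q ^ b') * (1 - q ^ (b' + 1)) * f a (Suc b') k - (1 - x * q ^ (a + b')) * f a b' k
        = g a b' (Suc k) - g a b' k"
      using telescope[of k "b' - k" "a - b' - 1"] by (metis Suc_eq_plus1)
  next
    fix b' :: nat assume "b' < b"
    then have "a = b' + 1 + (a - b' - 1)"
      using that by auto
    then show "(1 - x * q ^ b') * (1 - q ^ (b' + 1)) * f a (Suc b') (Suc b') = - g a b' (Suc b')"
      using top[of b' "a - b' - 1"] by metis
    show "(1 - x * q ^ b') * (1 - q ^ (b' + 1)) \<noteq> 0"
      using hq hx by simp
  qed (use base bottom vdm_sum_Suc[OF hq hx] in simp_all)
  show ?thesis
  proof (cases "b \<le> a")
    case False
    then show ?thesis
      using ordered[of a b] by (simp add: min_def commute vdm_sum_commute)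
  qed (simp add: ordered min_def)
qed

lemma vdm_pow_sum:
  assumes hq: "\<And>k. 1 - q * q ^ k \<noteq> 0" and hx: "\<And>k. 1 - x * q ^ k \<noteq> 0"
  shows "(\<Sum>k\<le>min a b. vdm_term_pow x q a b k) = vdm_sum x q a b"
proof (rule vdm_sum_by_telescoping[OF hq hx _ vdm_term_pow_telescopes[OF hq hx]])
  fix b s :: nat
  have "qpoch_nat q q b \<noteq> 0" "qpoch_nat x q b \<noteq> 0" "1 - q * q ^ b \<noteq> 0" "1 - x * q ^ b \<noteq> 0"
    using qpoch_nat_nonzero[OF hq] qpoch_nat_nonzero[OF hx] hq hx by auto
  then show "(1 - x * q ^ b) * (1 - q ^ (b + 1)) * vdm_term_pow x q (b + 1 + s) (Suc b) (Suc b)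
      = - vdm_cert_pow x q (b + 1 + s) b (Suc b)"
    by (simp add: vdm_term_pow_def vdm_cert_pow_def qpoch_nat_Suc mult_ac del: of_nat_Suc)
qed (use qpoch_nat_nonzero[OF hx] in \<open>simp_all add: vdm_term_pow_def vdm_cert_pow_def vdm_sum_def mult_ac\<close>)

lemma vdm_gauss_sum:
  assumes hq: "\<And>k. 1 - q * q ^ k \<noteq> 0" and hx: "\<And>k. 1 - x * q ^ k \<noteq> 0"
  shows "(\<Sum>k\<le>min a b. vdm_term_gauss x q a b k) = vdm_sum x q a b"
proof (rule vdm_sum_by_telescoping[OF hq hx _ vdm_term_gauss_telescopes[OF hq hx]])
  fix b s :: nat
  have "qpoch_nat q q b \<noteq> 0" "qpoch_nat x q b \<noteq> 0" "1 - q * q ^ b \<noteq> 0" "1 - x * q ^ b \<noteq> 0"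
    using qpoch_nat_nonzero[OF hq] qpoch_nat_nonzero[OF hx] hq hx by auto
  then show "(1 - x * q ^ b) * (1 - q ^ (b + 1)) * vdm_term_gauss x q (b + 1 + s) (Suc b) (Suc b)
      = - vdm_cert_gauss x q (b + 1 + s) b (Suc b)"
    by (simp add: vdm_term_gauss_def vdm_cert_gauss_def qpoch_nat_Suc mult_ac del: of_nat_Suc)
qed (use qpoch_nat_nonzero[OF hx] in \<open>simp_all add: vdm_term_gauss_def vdm_cert_gauss_def vdm_sum_def mult_ac\<close>)

section \<open>The case \<open>y = 0\<close> with natural indices\<close>

lemma sum_if_eq_sum_subset:
  fixes F :: "'b \<Rightarrow> 'a::comm_monoid_add"
  assumes "finite A" "{x \<in> A. P x} = B"
  shows "(\<Sum>x\<in>A. if P x then F x else 0) = (\<Sum>x\<in>B. F x)"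
  using assms sum.inter_filter by metis

lemma sum_triangular_reindex:
  fixes F :: "nat \<Rightarrow> nat \<Rightarrow> nat \<Rightarrow> 'a::comm_monoid_add"
  shows "(\<Sum>a\<le>n. \<Sum>b\<le>m. \<Sum>k\<le>min a b. F a b k) = (\<Sum>k\<le>min n m. \<Sum>i\<le>n - k. \<Sum>j\<le>m - k. F (k + i) (k + j) k)"
proof -
  let ?G = "\<lambda>a b k. if k \<le> a \<and> k \<le> b then F a b k else 0"
  have "(\<Sum>a\<le>n. \<Sum>b\<le>m. \<Sum>k\<le>min a b. F a b k) = (\<Sum>a\<le>n. \<Sum>b\<le>m. \<Sum>k\<le>min n m. ?G a b k)"
    by (intro sum.cong refl sum_if_eq_sum_subset[symmetric]) auto
  also have "\<dots> = (\<Sum>a\<le>n. \<Sum>k\<le>min n m. \<Sum>b\<le>m. ?G a b k)"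
    by (intro sum.cong refl sum.swap)
  also have "\<dots> = (\<Sum>k\<le>min n m. \<Sum>a\<le>n. \<Sum>b\<le>m. ?G a b k)"
    by (rule sum.swap)
  also have "\<dots> = (\<Sum>k\<le>min n m. \<Sum>a\<in>{k..n}. \<Sum>b\<in>{k..m}. F a b k)"
  proof (rule sum.cong[OF refl])
    fix k assume "k \<in> {..min n m}"
    have "(\<Sum>b\<le>m. ?G a b k) = (if k \<le> a then \<Sum>b\<in>{k..m}. F a b k else 0)" for a
      by (cases "k \<le> a") (auto intro: sum_if_eq_sum_subset)
    then show "(\<Sum>a\<le>n. \<Sum>b\<le>m. ?G a b k) = (\<Sum>a\<in>{k..n}. \<Sum>b\<in>{k..m}. F a b k)"
      by (auto intro: sum_if_eq_sum_subset)
  qed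
  also have "\<dots> = (\<Sum>k\<le>min n m. \<Sum>i\<le>n - k. \<Sum>j\<le>m - k. F (k + i) (k + j) k)"
    by (rule sum.cong[OF refl]) (simp add: sum.atLeastAtMost_shift_0 atLeast0AtMost comp_def)
  finally show ?thesis .
qed

definition kernel_nat :: "'a::field \<Rightarrow> 'a \<Rightarrow> 'a \<Rightarrow> nat \<Rightarrow> nat \<Rightarrow> nat \<Rightarrow> nat \<Rightarrow> 'a" where
  "kernel_nat z w q n m a b =
     (z / q) ^ a * (w / q) ^ b * (q ^ (a * a + b * b) / q ^ (a * b)) / (qpoch_nat q q (n - a) * qpoch_nat q q (m - b))"

definition diagonal_coeff :: "'a::field \<Rightarrow> 'a \<Rightarrow> 'a \<Rightarrow> nat \<Rightarrow> 'a" where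
  "diagonal_coeff z w q k = (z * w / q) ^ k * q ^ (k * k - k)
     / (qpoch_nat q q k * qpoch_nat (z * w / q) q k * qpoch_nat z q k * qpoch_nat w q k)"

lemma kernel_vdm_term_gauss_split:
  assumes q0: "q \<noteq> 0" and hq: "\<And>k. 1 - q * q ^ k \<noteq> 0" and hz: "\<And>k. 1 - z * q ^ k \<noteq> 0"
    and hw: "\<And>k. 1 - w * q ^ k \<noteq> 0" and hx: "\<And>k. 1 - (z * w / q) * q ^ k \<noteq> 0"
  shows "kernel_nat z w q n m (k + i) (k + j) * vdm_term_gauss (z * w / q) q (k + i) (k + j) k
           / (qpoch_nat z q (k + i) * qpoch_nat w q (k + j))
       = diagonal_coeff z w q k * qchu_term (z * q ^ k) q (n - k) i * qchu_term (w * q ^ k) q (m - k) j"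
proof -
  have shifted: "\<And>l. 1 - z * q ^ k * q ^ l \<noteq> 0" "\<And>l. 1 - w * q ^ k * q ^ l \<noteq> 0"
    using hz hw by (metis mult.assoc power_add)+
  have nonzero: "qpoch_nat q q k \<noteq> 0" "qpoch_nat q q i \<noteq> 0" "qpoch_nat q q j \<noteq> 0"
    "qpoch_nat q q (n - k - i) \<noteq> 0" "qpoch_nat q q (m - k - j) \<noteq> 0"
    "qpoch_nat z q k \<noteq> 0" "qpoch_nat w q k \<noteq> 0" "qpoch_nat (z * q ^ k) q i \<noteq> 0"
    "qpoch_nat (w * q ^ k) q j \<noteq> 0" "qpoch_nat (z * w / q) q k \<noteq> 0"
    using qpoch_nat_nonzero[OF hq] qpoch_nat_nonzero[OF hz] qpoch_nat_nonzero[OF hw]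
      qpoch_nat_nonzero[OF shifted(1)] qpoch_nat_nonzero[OF shifted(2)] qpoch_nat_nonzero[OF hx] by auto
  have indices: "n - (k + i) = n - k - i" "m - (k + j) = m - k - j" "k + i - k = i" "k + j - k = j"
    by auto
  have sq: "\<And>l. q ^ (l * l - l) = q ^ (l * l) / q ^ l"
    using q0 by (simp add: power_diff)
  show ?thesis
    using nonzero q0
    unfolding kernel_nat_def diagonal_coeff_def qchu_term_def vdm_term_gauss_def indices qpoch_nat_add
    by (simp add: sq power_mult_distrib power_divide, simp add: algebra_simps power_add power_mult,
        metis mult.commute power_mult)
qed

lemma diagonal_coeff_qchu:
  assumes hq: "\<And>k. 1 - q * q ^ k \<noteq> 0" and hz: "\<And>k. 1 - z * q ^ k \<noteq> 0"
    and hw: "\<And>k. 1 - w * q ^ k \<noteq> 0" and hx: "\<And>k. 1 - (z * w / q) * q ^ k \<noteq> 0"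
    and "k \<le> n" "k \<le> m"
  shows "diagonal_coeff z w q k / (qpoch_nat q q (n - k) * qpoch_nat (z * q ^ k) q (n - k)
           * (qpoch_nat q q (m - k) * qpoch_nat (w * q ^ k) q (m - k)))
       = vdm_term_pow (z * w / q) q n m k / (qpoch_nat z q n * qpoch_nat w q m)"
proof -
  have shifted: "\<And>l. 1 - z * q ^ k * q ^ l \<noteq> 0" "\<And>l. 1 - w * q ^ k * q ^ l \<noteq> 0"
    using hz hw by (metis mult.assoc power_add)+
  have "qpoch_nat q q k \<noteq> 0" "qpoch_nat q q (n - k) \<noteq> 0" "qpoch_nat q q (m - k) \<noteq> 0"
    "qpoch_nat z q k \<noteq> 0" "qpoch_nat w q k \<noteq> 0" "qpoch_nat (z * q ^ k) q (n - k) \<noteq> 0"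
    "qpoch_nat (w * q ^ k) q (m - k) \<noteq> 0" "qpoch_nat (z * w / q) q k \<noteq> 0"
    using qpoch_nat_nonzero[OF hq] qpoch_nat_nonzero[OF hz] qpoch_nat_nonzero[OF hw]
      qpoch_nat_nonzero[OF shifted(1)] qpoch_nat_nonzero[OF shifted(2)] qpoch_nat_nonzero[OF hx] by auto
  moreover have "qpoch_nat z q n = qpoch_nat z q k * qpoch_nat (z * q ^ k) q (n - k)"
    "qpoch_nat w q m = qpoch_nat w q k * qpoch_nat (w * q ^ k) q (m - k)"
    using qpoch_nat_add[of z q k "n - k"] qpoch_nat_add[of w q k "m - k"] assms(5,6) by simp_all
  ultimately show ?thesis
    unfolding diagonal_coeff_def vdm_term_pow_def by (simp add: field_simps)
qed

lemma kernel_vdm_sum: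
  assumes q0: "q \<noteq> 0" and hq: "\<And>k. 1 - q * q ^ k \<noteq> 0" and hz: "\<And>k. 1 - z * q ^ k \<noteq> 0"
    and hw: "\<And>k. 1 - w * q ^ k \<noteq> 0" and hx: "\<And>k. 1 - (z * w / q) * q ^ k \<noteq> 0"
  shows "(\<Sum>a\<le>n. \<Sum>b\<le>m. kernel_nat z w q n m a b * (vdm_sum (z * w / q) q a b / (qpoch_nat z q a * qpoch_nat w q b)))
       = vdm_sum (z * w / q) q n m / (qpoch_nat z q n * qpoch_nat w q m)"
    (is "?lhs = _")
proof -
  define x where "x = z * w / q"
  define T where "T a b k = kernel_nat z w q n m a b * vdm_term_gauss x q a b k / (qpoch_nat z q a * qpoch_nat w q b)"
    for a b k
  define S where "S k = diagonal_coeff z w q k * (\<Sum>i\<le>n - k. qchu_term (z * q ^ k) q (n - k) i)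
    * (\<Sum>j\<le>m - k. qchu_term (w * q ^ k) q (m - k) j)" for k
  have shifted: "\<And>k l. 1 - z * q ^ k * q ^ l \<noteq> 0" "\<And>k l. 1 - w * q ^ k * q ^ l \<noteq> 0"
    using hz hw by (metis mult.assoc power_add)+
  have "?lhs = (\<Sum>a\<le>n. \<Sum>b\<le>m. \<Sum>k\<le>min a b. T a b k)"
    unfolding T_def x_def vdm_gauss_sum[OF hq hx, symmetric]
    by (simp add: sum_distrib_left sum_divide_distrib)
  also have "\<dots> = (\<Sum>k\<le>min n m. \<Sum>i\<le>n - k. \<Sum>j\<le>m - k. T (k + i) (k + j) k)"
    by (rule sum_triangular_reindex)
  also have "\<dots> = (\<Sum>k\<le>min n m. S k)"
    unfolding S_def T_def x_def kernel_vdm_term_gauss_split[OF q0 hq hz hw hx] mult.assoc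
    unfolding sum_product unfolding sum_distrib_left ..
  also have "\<dots> = (\<Sum>k\<le>min n m. vdm_term_pow x q n m k / (qpoch_nat z q n * qpoch_nat w q m))"
    unfolding S_def x_def
    by (rule sum.cong[OF refl]) (simp add: qchu_sum[OF hq shifted(1)] qchu_sum[OF hq shifted(2)]
        diagonal_coeff_qchu[OF hq hz hw hx])
  also have "\<dots> = vdm_sum x q n m / (qpoch_nat z q n * qpoch_nat w q m)"
    by (simp add: vdm_pow_sum[OF hq hx[folded x_def]] flip: sum_divide_distrib)
  finally show ?thesis
    unfolding x_def .
qed

section \<open>Integer-indexed q-Pochhammer symbols\<close>

lemma qpoch_0 [simp]: "qpoch a q 0 = 1"
  by (simp add: qpoch_def)

lemma qpoch_of_nat: "qpoch a q (int N) = qpoch_nat a q N"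
  by (simp add: qpoch_def qpoch_nat_def)

lemma qpoch_neg_of_nat: "qpoch a q (- int N) = inverse (\<Prod>k\<in>{1..N}. 1 - a * inverse q ^ k)"
  by (cases "N = 0") (simp_all add: qpoch_def)

lemma qpoch_q_negative:
  assumes "q \<noteq> 0" and "n < 0"
  shows "qpoch q q n = 0"
proof -
  have "(\<Prod>k\<in>{1..nat (- n)}. 1 - q * inverse q ^ k) = 0"
    using assms by (intro prod_zero bexI[of _ 1]) auto
  then show ?thesis
    using assms(2) by (simp add: qpoch_def)
qed

lemma qpoch_plus_1:
  assumes "1 - a * q powi n \<noteq> 0"
  shows "qpoch a q (n + 1) = qpoch a q n * (1 - a * q powi n)"
proof (cases "0 \<le> n")
  case True
  then obtain N where "n = int N"
    by (metis nonneg_eq_int)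
  then show ?thesis
    using qpoch_of_nat[of a q "Suc N"] qpoch_of_nat[of a q N] by (simp add: qpoch_nat_Suc add.commute)
next
  case False
  define M where "M = nat (- n - 1)"
  then have M: "n = - int (Suc M)" "n + 1 = - int M"
    using False by simp_all
  have "q powi n = inverse q ^ Suc M"
    unfolding M(1) by (simp only: power_int_minus power_int_of_nat power_inverse)
  then show ?thesis
    using assms qpoch_neg_of_nat[of a q "Suc M"] qpoch_neg_of_nat[of a q M]
    unfolding M by (simp add: prod.nat_ivl_Suc' inverse_mult_distrib)
qed

lemma qpoch_nonzero:
  assumes "\<And>j::int. 1 - a * q powi j \<noteq> 0"
  shows "qpoch a q n \<noteq> 0"
proof -
  have "1 - a * q ^ k \<noteq> 0" "1 - a * inverse q ^ k \<noteq> 0" for k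
    using assms[of "int k"] assms[of "- int k"] by (simp_all add: power_int_minus power_inverse)
  then show ?thesis
    by (simp add: qpoch_def)
qed

lemma qpoch_mult_shift:
  assumes q0: "q \<noteq> 0" and a: "\<And>j::int. 1 - a * q powi j \<noteq> 0"
  shows "qpoch (a * q powi k) q n * qpoch a q k = qpoch a q (n + k)"
proof (induction n rule: int_induct[where k = 0])
  case base
  then show ?case by simp
next
  case (step1 i)
  have exponent: "a * q powi k * q powi i = a * q powi (i + k)"
    using q0 by (simp add: power_int_add mult.assoc mult.commute)
  have "qpoch (a * q powi k) q (i + 1) = qpoch (a * q powi k) q i * (1 - a * q powi (i + k))"
    using qpoch_plus_1[of "a * q powi k" q i] a[of "i + k"] unfolding exponent by simp
  moreover have "qpoch a q (i + 1 + k) = qpoch a q (i + k) * (1 - a * q powi (i + k))"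
    using qpoch_plus_1[of a q "i + k"] a by (simp add: add_ac)
  ultimately show ?case
    using step1.IH by (metis mult.assoc mult.commute)
next
  case (step2 i)
  have c: "1 - a * q powi (i - 1 + k) \<noteq> 0"
    by (rule a)
  have exponent: "a * q powi k * q powi (i - 1) = a * q powi (i - 1 + k)"
    using q0 by (simp add: power_int_add mult.assoc mult.commute)
  have "qpoch (a * q powi k) q i = qpoch (a * q powi k) q (i - 1) * (1 - a * q powi (i - 1 + k))"
    using qpoch_plus_1[of "a * q powi k" q "i - 1"] c unfolding exponent by simp
  moreover have "qpoch a q (i + k) = qpoch a q (i - 1 + k) * (1 - a * q powi (i - 1 + k))"
    using qpoch_plus_1[OF c] by (simp add: algebra_simps)
  ultimately have "qpoch (a * q powi k) q (i - 1) * qpoch a q k * (1 - a * q powi (i - 1 + k))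
      = qpoch a q (i - 1 + k) * (1 - a * q powi (i - 1 + k))"
    using step2.IH by (metis mult.assoc mult.commute)
  then show ?case
    using c by simp
qed

lemma qpoch_shift:
  assumes "q \<noteq> 0" and "\<And>j::int. 1 - a * q powi j \<noteq> 0"
  shows "qpoch (a * q powi k) q n = qpoch a q (n + k) / qpoch a q k"
  using qpoch_mult_shift[OF assms, of k n] qpoch_nonzero[OF assms(2), of k] by (simp add: field_simps)

lemma powi_avoid_mult:
  fixes c q :: complex
  assumes "q \<noteq> 0" and "\<And>k::int. c \<noteq> q powi k"
  shows "c * q powi d \<noteq> q powi k"
proof
  assume "c * q powi d = q powi k"
  then have "c = q powi (k - d)"
    using assms(1) by (simp add: power_int_diff field_simps)
  then show False
    using assms(2) by blast
qed

lemma powi_avoid_div: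
  fixes c q :: complex
  assumes "q \<noteq> 0" and "\<And>k::int. c \<noteq> q powi k"
  shows "c / q \<noteq> q powi k"
  using powi_avoid_mult[OF assms, of "-1" k] by (simp add: power_int_minus divide_inverse)

lemma powi_avoid_mult_mult:
  fixes z w q :: complex
  assumes "q \<noteq> 0" and "\<And>k::int. z * w \<noteq> q powi k"
  shows "z * q powi d * (w * q powi e) \<noteq> q powi k"
proof -
  have "z * q powi d * (w * q powi e) = z * w * q powi (d + e)"
    using assms(1) by (simp add: power_int_add mult_ac)
  with powi_avoid_mult[OF assms] show ?thesis
    by metis
qed

lemma one_minus_powi_nonzero:
  fixes c q :: complex
  assumes "q \<noteq> 0" and "\<And>k::int. c \<noteq> q powi k"
  shows "1 - c * q powi j \<noteq> 0"
  using powi_avoid_mult[OF assms, of j 0] by simp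

lemma one_minus_power_nonzero:
  fixes c q :: complex
  assumes "q \<noteq> 0" and "\<And>k::int. c \<noteq> q powi k"
  shows "1 - c * q ^ j \<noteq> 0"
  using one_minus_powi_nonzero[OF assms, of "int j"] by simp

lemma sum_atLeast0_int:
  fixes f :: "int \<Rightarrow> 'a::comm_monoid_add"
  shows "(\<Sum>r\<in>{0..int N}. f r) = (\<Sum>a\<le>N. f (int a))"
proof -
  have "{0..int N} = int ` {..N}"
    by (simp add: image_int_atLeastAtMost atLeast0AtMost[symmetric])
  then show ?thesis
    by (simp add: sum.reindex)
qed

lemma Phi0_origin_of_nat:
  assumes "q \<noteq> 0"
  shows "Phi0 (int a) (int b) 0 0 0 (z / q) (w / q) q
       = vdm_sum (z * w / q) q a b / (qpoch_nat z q a * qpoch_nat w q b)"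
proof -
  have "z / q * (w / q) * q = z * w / q" "z / q * q = z" "w / q * q = w"
    using assms by (simp_all add: field_simps)
  then show ?thesis
    unfolding Phi0_def vdm_sum_def using qpoch_of_nat[of "z * w / q" q "a + b"]
    by (simp add: qpoch_of_nat mult_ac)
qed

lemma Kker_of_nat:
  assumes "q \<noteq> 0" and "a \<le> N" and "b \<le> M"
  shows "Kker (int N) (int M) (int a) (int b) (z / q) (w / q) q = kernel_nat z w q N M a b"
proof -
  have "(int a)\<^sup>2 - int a * int b + (int b)\<^sup>2 = int (a * a + b * b) - int (a * b)"
    by (simp add: power2_eq_square)
  then have "q powi ((int a)\<^sup>2 - int a * int b + (int b)\<^sup>2) = q ^ (a * a + b * b) / q ^ (a * b)"
    by (simp only: power_int_diff[OF disjI1[OF assms(1)]] power_int_of_nat)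
  moreover have "int N - int a = int (N - a)" "int M - int b = int (M - b)"
    using assms by auto
  ultimately show ?thesis
    unfolding Kker_def kernel_nat_def by (simp add: qpoch_of_nat power_int_of_nat del: of_nat_diff)
qed

lemma kernel_sum_Phi0_origin:
  fixes z w q :: complex and n m :: int
  assumes q0: "q \<noteq> 0" and hq: "\<And>k::nat. k > 0 \<Longrightarrow> q ^ k \<noteq> 1"
    and hz: "\<And>k::int. z \<noteq> q powi k" and hw: "\<And>k::int. w \<noteq> q powi k"
    and hzw: "\<And>k::int. z * w \<noteq> q powi k"
  shows "(\<Sum>r\<in>{0..n}. \<Sum>s\<in>{0..m}. Kker n m r s (z / q) (w / q) q * Phi0 r s 0 0 0 (z / q) (w / q) q)
       = Phi0 n m 0 0 0 (z / q) (w / q) q"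
proof (cases "n < 0 \<or> m < 0")
  case True
  then show ?thesis
    using qpoch_q_negative[OF q0] by (auto simp: Phi0_def)
next
  case False
  then obtain N M where N: "n = int N" and M: "m = int M"
    by (metis nonneg_eq_int not_less)
  have hq': "\<And>k. 1 - q * q ^ k \<noteq> 0"
    using hq[of "Suc _"] by simp
  have hz': "\<And>k. 1 - z * q ^ k \<noteq> 0" and hw': "\<And>k. 1 - w * q ^ k \<noteq> 0"
    and hx': "\<And>k. 1 - (z * w / q) * q ^ k \<noteq> 0"
    using one_minus_power_nonzero[OF q0] hz hw powi_avoid_div[OF q0 hzw] by blast+
  have "(\<Sum>r\<in>{0..n}. \<Sum>s\<in>{0..m}. Kker n m r s (z / q) (w / q) q * Phi0 r s 0 0 0 (z / q) (w / q) q)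
      = (\<Sum>a\<le>N. \<Sum>b\<le>M. kernel_nat z w q N M a b * (vdm_sum (z * w / q) q a b / (qpoch_nat z q a * qpoch_nat w q b)))"
    unfolding N M sum_atLeast0_int by (intro sum.cong refl) (simp add: Kker_of_nat Phi0_origin_of_nat q0)
  also have "\<dots> = Phi0 n m 0 0 0 (z / q) (w / q) q"
    unfolding N M Phi0_origin_of_nat[OF q0] by (rule kernel_vdm_sum[OF q0 hq' hz' hw' hx'])
  finally show ?thesis .
qed

section \<open>Shifting \<open>y\<close>\<close>

lemma Phi0_shift:
  fixes z w q :: complex and a b y1 y2 y3 :: int
  assumes y: "y1 + y2 + y3 = 0" and q0: "q \<noteq> 0"
    and hz: "\<And>k::int. z \<noteq> q powi k" and hw: "\<And>k::int. w \<noteq> q powi k"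
    and hzw: "\<And>k::int. z * w \<noteq> q powi k"
  shows "Phi0 a b y1 y2 y3 (z / q) (w / q) q
       = Phi0 (a - y1) (b - (y1 + y2)) 0 0 0 (z * q powi (y1 - y2) / q) (w * q powi (y2 - y3) / q) q
         / (qpoch z q (y1 - y2) * qpoch w q (y2 - y3) * qpoch (z * w / q) q (y1 - y3))"
proof -
  define x where "x = z * w / q"
  have gz: "\<And>j. 1 - z * q powi j \<noteq> 0" and gw: "\<And>j. 1 - w * q powi j \<noteq> 0"
    and gx: "\<And>j. 1 - x * q powi j \<noteq> 0"
    unfolding x_def using one_minus_powi_nonzero[OF q0] hz hw powi_avoid_div[OF q0 hzw] by blast+
  have products: "z / q * (w / q) * q = x" "z / q * q = z" "w / q * q = w"
    using q0 by (simp_all add: field_simps x_def)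
  have shifted_products: "z * q powi (y1 - y2) / q * (w * q powi (y2 - y3) / q) * q = x * q powi (y1 - y3)"
    "z * q powi (y1 - y2) / q * q = z * q powi (y1 - y2)" "w * q powi (y2 - y3) / q * q = w * q powi (y2 - y3)"
    using q0 power_int_add[of q "y1 - y2" "y2 - y3"] by (simp_all add: field_simps x_def)
  have indices: "a - y1 - 0 = a - y1" "b - (y1 + y2) + 0 = b + y3" "a - y1 + (b - (y1 + y2)) + (y1 - y3) = a + b"
    "a - y1 - 0 + (y1 - y2) = a - y2" "a - y1 - 0 + (y1 - y3) = a - y3"
    "b - (y1 + y2) + 0 + (y2 - y3) = b + y2" "b - (y1 + y2) + 0 + (y1 - y3) = b + y1"
    using y by auto
  have nonzero: "qpoch z q (y1 - y2) \<noteq> 0" "qpoch w q (y2 - y3) \<noteq> 0" "qpoch x q (y1 - y3) \<noteq> 0"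
    "qpoch z q (a - y2) \<noteq> 0" "qpoch x q (a - y3) \<noteq> 0" "qpoch w q (b + y2) \<noteq> 0" "qpoch x q (b + y1) \<noteq> 0"
    using qpoch_nonzero[OF gz] qpoch_nonzero[OF gw] qpoch_nonzero[OF gx] by auto
  note unfold_shift = Phi0_def products shifted_products qpoch_shift[OF q0 gz] qpoch_shift[OF q0 gw] qpoch_shift[OF q0 gx] indices
  show ?thesis
  proof (cases "qpoch q q (a - y1) = 0 \<or> qpoch q q (b + y3) = 0")
    case True
    then show ?thesis
      unfolding unfold_shift by auto
  next
    case False
    then show ?thesis
      using nonzero unfolding unfold_shift x_def[symmetric] by (simp add: field_simps)
  qed
qed

definition shift_factor :: "complex \<Rightarrow> complex \<Rightarrow> complex \<Rightarrow> int \<Rightarrow> int \<Rightarrow> complex" where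
  "shift_factor z w q y1 y2 =
     (z / q) powi y1 * (w / q) powi (y1 + y2) * q powi (y1\<^sup>2 - y1 * (y1 + y2) + (y1 + y2)\<^sup>2)"

lemma shift_factor_eq:
  fixes z w q :: complex and y1 y2 y3 :: int
  assumes y: "y1 + y2 + y3 = 0" and q0: "q \<noteq> 0"
  shows "shift_factor z w q y1 y2
       = z powi y1 * w powi (y1 + y2) * q powi ((y1\<^sup>2 + y2\<^sup>2 + y3\<^sup>2) div 2 - 2 * y1 - y2)"
proof -
  define E where "E = y1\<^sup>2 - y1 * (y1 + y2) + (y1 + y2)\<^sup>2"
  have y3: "y3 = - y1 - y2"
    using y by simp
  have "y1\<^sup>2 + y2\<^sup>2 + y3\<^sup>2 = 2 * E"
    unfolding E_def y3 by (simp add: power2_eq_square algebra_simps)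
  then have "(y1\<^sup>2 + y2\<^sup>2 + y3\<^sup>2) div 2 - 2 * y1 - y2 = E - y1 - (y1 + y2)"
    by simp
  then have "q powi ((y1\<^sup>2 + y2\<^sup>2 + y3\<^sup>2) div 2 - 2 * y1 - y2) = q powi E / q powi y1 / q powi (y1 + y2)"
    by (simp only: power_int_diff[OF disjI1[OF q0]])
  moreover have "q powi y1 \<noteq> 0" "q powi (y1 + y2) \<noteq> 0"
    using q0 by auto
  ultimately show ?thesis
    unfolding shift_factor_def E_def[symmetric] power_int_divide_distrib by (simp add: field_simps)
qed

lemma Kker_shift:
  fixes z w q :: complex and n m r s y1 y2 y3 :: int
  assumes y: "y1 + y2 + y3 = 0" and q0: "q \<noteq> 0" and z0: "z \<noteq> 0" and w0: "w \<noteq> 0"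
  shows "Kker n m (r + y1) (s + (y1 + y2)) (z / q) (w / q) q
       = shift_factor z w q y1 y2 * Kker (n - y1) (m - (y1 + y2)) r s (z * q powi (y1 - y2) / q) (w * q powi (y2 - y3) / q) q"
proof -
  have y3: "y3 = - y1 - y2"
    using y by simp
  have "(r + y1)\<^sup>2 - (r + y1) * (s + (y1 + y2)) + (s + (y1 + y2))\<^sup>2
      = ((r\<^sup>2 - r * s + s\<^sup>2) + (y1 - y2) * r) + ((y2 - y3) * s + (y1\<^sup>2 - y1 * (y1 + y2) + (y1 + y2)\<^sup>2))"
    unfolding y3 by (simp add: power2_eq_square algebra_simps)
  then have exponent: "q powi ((r + y1)\<^sup>2 - (r + y1) * (s + (y1 + y2)) + (s + (y1 + y2))\<^sup>2)
      = q powi (r\<^sup>2 - r * s + s\<^sup>2) * (q powi (y1 - y2)) powi r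
        * ((q powi (y2 - y3)) powi s * q powi (y1\<^sup>2 - y1 * (y1 + y2) + (y1 + y2)\<^sup>2))"
    by (simp only: power_int_add[OF disjI1[OF q0]] power_int_mult)
  have powers: "(z / q) powi (r + y1) = (z / q) powi r * (z / q) powi y1"
    "(w / q) powi (s + (y1 + y2)) = (w / q) powi s * (w / q) powi (y1 + y2)"
    "(z * q powi (y1 - y2) / q) powi r = (z / q) powi r * (q powi (y1 - y2)) powi r"
    "(w * q powi (y2 - y3) / q) powi s = (w / q) powi s * (q powi (y2 - y3)) powi s"
    using q0 z0 w0 by (simp_all add: power_int_add power_int_mult_distrib mult.commute mult.left_commute divide_inverse)
  have indices: "n - (r + y1) = n - y1 - r" "m - (s + (y1 + y2)) = m - (y1 + y2) - s"
    by auto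
  show ?thesis
    unfolding Kker_def shift_factor_def exponent powers indices by (simp add: mult_ac)
qed

lemma sum_int_shift_0:
  fixes g :: "int \<Rightarrow> 'a::comm_monoid_add"
  shows "(\<Sum>r\<in>{a..b}. g r) = (\<Sum>r\<in>{0..b - a}. g (r + a))"
  by (rule sum.reindex_bij_witness[where i = "\<lambda>r. r + a" and j = "\<lambda>r. r - a"]) auto

lemma kernel_sum_shift:
  fixes z w q :: complex and n m y1 y2 y3 :: int and f :: "int \<Rightarrow> int \<Rightarrow> complex"
  assumes "y1 + y2 + y3 = 0" and "q \<noteq> 0" and "z \<noteq> 0" and "w \<noteq> 0"
  shows "(\<Sum>r\<in>{y1..n}. \<Sum>s\<in>{y1 + y2..m}. Kker n m r s (z / q) (w / q) q * f (r - y1) (s - (y1 + y2)))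
       = shift_factor z w q y1 y2 * (\<Sum>r\<in>{0..n - y1}. \<Sum>s\<in>{0..m - (y1 + y2)}.
            Kker (n - y1) (m - (y1 + y2)) r s (z * q powi (y1 - y2) / q) (w * q powi (y2 - y3) / q) q * f r s)"
  unfolding sum_int_shift_0[of _ y1 n] sum_int_shift_0[of _ "y1 + y2" m]
  by (simp add: Kker_shift[OF assms] sum_distrib_left mult.assoc)

lemma kernel_sum_Phi0:
  fixes z w q :: complex and n m y1 y2 y3 :: int
  assumes y: "y1 + y2 + y3 = 0" and q0: "q \<noteq> 0" and hq: "\<And>k::nat. k > 0 \<Longrightarrow> q ^ k \<noteq> 1"
    and z0: "z \<noteq> 0" and w0: "w \<noteq> 0"
    and hz: "\<And>k::int. z \<noteq> q powi k" and hw: "\<And>k::int. w \<noteq> q powi k"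
    and hzw: "\<And>k::int. z * w \<noteq> q powi k"
  shows "(\<Sum>r\<in>{y1..n}. \<Sum>s\<in>{y1 + y2..m}. Kker n m r s (z / q) (w / q) q * Phi0 r s y1 y2 y3 (z / q) (w / q) q)
       = shift_factor z w q y1 y2 * Phi0 n m y1 y2 y3 (z / q) (w / q) q"
proof -
  define z' where "z' = z * q powi (y1 - y2)"
  define w' where "w' = w * q powi (y2 - y3)"
  define D where "D = qpoch z q (y1 - y2) * qpoch w q (y2 - y3) * qpoch (z * w / q) q (y1 - y3)"
  have hz': "\<And>k. z' \<noteq> q powi k" and hw': "\<And>k. w' \<noteq> q powi k" and hzw': "\<And>k. z' * w' \<noteq> q powi k"
    unfolding z'_def w'_def using powi_avoid_mult[OF q0] powi_avoid_mult_mult[OF q0] hz hw hzw by auto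
  have "(\<Sum>r\<in>{y1..n}. \<Sum>s\<in>{y1 + y2..m}. Kker n m r s (z / q) (w / q) q * Phi0 r s y1 y2 y3 (z / q) (w / q) q)
      = (\<Sum>r\<in>{y1..n}. \<Sum>s\<in>{y1 + y2..m}. Kker n m r s (z / q) (w / q) q *
            (\<lambda>a b. Phi0 a b 0 0 0 (z' / q) (w' / q) q / D) (r - y1) (s - (y1 + y2)))"
    unfolding Phi0_shift[OF y q0 hz hw hzw] z'_def w'_def D_def by simp
  also have "\<dots> = shift_factor z w q y1 y2 * (\<Sum>r\<in>{0..n - y1}. \<Sum>s\<in>{0..m - (y1 + y2)}.
            Kker (n - y1) (m - (y1 + y2)) r s (z' / q) (w' / q) q * (Phi0 r s 0 0 0 (z' / q) (w' / q) q / D))"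
    unfolding z'_def w'_def by (rule kernel_sum_shift[OF y q0 z0 w0])
  also have "\<dots> = shift_factor z w q y1 y2 * ((\<Sum>r\<in>{0..n - y1}. \<Sum>s\<in>{0..m - (y1 + y2)}.
            Kker (n - y1) (m - (y1 + y2)) r s (z' / q) (w' / q) q * Phi0 r s 0 0 0 (z' / q) (w' / q) q) / D)"
    by (simp add: sum_divide_distrib)
  also have "\<dots> = shift_factor z w q y1 y2 * (Phi0 (n - y1) (m - (y1 + y2)) 0 0 0 (z' / q) (w' / q) q / D)"
    using kernel_sum_Phi0_origin[OF q0 hq hz' hw' hzw', of "n - y1" "m - (y1 + y2)"] by simp
  also have "\<dots> = shift_factor z w q y1 y2 * Phi0 n m y1 y2 y3 (z / q) (w / q) q"
    unfolding Phi0_shift[OF y q0 hz hw hzw] z'_def w'_def D_def ..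
  finally show ?thesis .
qed

section \<open>Summation over \<open>S\<^sub>3\<close>\<close>

lemma permutes_123_cases:
  fixes \<sigma> :: "int \<Rightarrow> int"
  assumes "\<sigma> permutes {1, 2, 3}"
  obtains "\<sigma> 1 = 1" "\<sigma> 2 = 2" "\<sigma> 3 = 3" | "\<sigma> 1 = 1" "\<sigma> 2 = 3" "\<sigma> 3 = 2"
    | "\<sigma> 1 = 2" "\<sigma> 2 = 1" "\<sigma> 3 = 3" | "\<sigma> 1 = 2" "\<sigma> 2 = 3" "\<sigma> 3 = 1"
    | "\<sigma> 1 = 3" "\<sigma> 2 = 1" "\<sigma> 3 = 2" | "\<sigma> 1 = 3" "\<sigma> 2 = 2" "\<sigma> 3 = 1"
proof -
  have "\<sigma> 1 \<in> {1, 2, 3}" "\<sigma> 2 \<in> {1, 2, 3}" "\<sigma> 3 \<in> {1, 2, 3}"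
    using permutes_in_image[OF assms] by simp_all
  moreover have "\<sigma> 1 \<noteq> \<sigma> 2" "\<sigma> 1 \<noteq> \<sigma> 3" "\<sigma> 2 \<noteq> \<sigma> 3"
    using permutes_inj[OF assms] by (simp_all add: inj_eq)
  ultimately show ?thesis
    using that by auto
qed

lemma Phi0_eq_0_if_less:
  assumes "q \<noteq> 0" and "r < y1 \<or> s + y3 < 0"
  shows "Phi0 r s y1 y2 y3 z w q = 0"
  using assms qpoch_q_negative[OF assms(1), of "r - y1"] qpoch_q_negative[OF assms(1), of "s + y3"]
  by (auto simp: Phi0_def)

lemma kernel_sum_Phi0_extend:
  fixes z w q :: complex and n m y1 y2 y3 :: int
  assumes y: "y1 + y2 + y3 = 0" and q0: "q \<noteq> 0" and "0 \<le> y1" and "0 \<le> y1 + y2"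
  shows "(\<Sum>r\<in>{0..n}. \<Sum>s\<in>{0..m}. Kker n m r s (z / q) (w / q) q * Phi0 r s y1 y2 y3 (z / q) (w / q) q)
       = (\<Sum>r\<in>{y1..n}. \<Sum>s\<in>{y1 + y2..m}. Kker n m r s (z / q) (w / q) q * Phi0 r s y1 y2 y3 (z / q) (w / q) q)"
proof -
  have "(\<Sum>s\<in>{0..m}. Kker n m r s (z / q) (w / q) q * Phi0 r s y1 y2 y3 (z / q) (w / q) q)
      = (\<Sum>s\<in>{y1 + y2..m}. Kker n m r s (z / q) (w / q) q * Phi0 r s y1 y2 y3 (z / q) (w / q) q)" for r
    using assms by (intro sum.mono_neutral_right) (auto simp: Phi0_eq_0_if_less)
  then show ?thesis
    using assms by (simp, intro sum.mono_neutral_right) (auto simp: Phi0_eq_0_if_less)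
qed

lemma kernel_sum_Phi0_perm:
  fixes z w q :: complex and n m :: int and \<sigma> :: "int \<Rightarrow> int"
  assumes \<sigma>: "\<sigma> permutes {1, 2, 3}" and q0: "q \<noteq> 0" and hq: "\<And>k::nat. k > 0 \<Longrightarrow> q ^ k \<noteq> 1"
    and z0: "z \<noteq> 0" and w0: "w \<noteq> 0"
    and hz: "\<And>k::int. z \<noteq> q powi k" and hw: "\<And>k::int. w \<noteq> q powi k"
    and hzw: "\<And>k::int. z * w \<noteq> q powi k"
  shows "(\<Sum>r\<in>{0..n}. \<Sum>s\<in>{0..m}.
            Kker n m r s (z / q) (w / q) q * Phi0 r s (\<sigma> 1 - 1) (\<sigma> 2 - 2) (\<sigma> 3 - 3) (z / q) (w / q) q)
       = z ^ nat (\<sigma> 1 - 1) * w ^ nat (3 - \<sigma> 3) * Phi0 n m (\<sigma> 1 - 1) (\<sigma> 2 - 2) (\<sigma> 3 - 3) (z / q) (w / q) q"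
proof -
  define y1 y2 y3 where "y1 = \<sigma> 1 - 1" and "y2 = \<sigma> 2 - 2" and "y3 = \<sigma> 3 - 3"
  txt \<open>For \<open>y = \<sigma> - \<rho>\<close> the lower summation bounds are nonnegative and the power of \<open>q\<close>
    in \<open>shift_factor_eq\<close> vanishes.\<close>
  have y: "y1 + y2 + y3 = 0" and y1: "0 \<le> y1" and y12: "0 \<le> y1 + y2" and y12_eq: "y1 + y2 = 3 - \<sigma> 3"
    and exponent: "(y1\<^sup>2 + y2\<^sup>2 + y3\<^sup>2) div 2 - 2 * y1 - y2 = 0"
    unfolding y1_def y2_def y3_def by (cases rule: permutes_123_cases[OF \<sigma>]; simp add: power2_eq_square)+
  have "shift_factor z w q y1 y2 = z ^ nat y1 * w ^ nat (y1 + y2)"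
    using y1 y12 by (simp add: shift_factor_eq[OF y q0] exponent power_int_def)
  then show ?thesis
    using kernel_sum_Phi0_extend[OF y q0 y1 y12] kernel_sum_Phi0[OF y q0 hq z0 w0 hz hw hzw]
    unfolding y1_def y2_def y3_def y12_eq[unfolded y1_def y2_def] by simp
qed

definition perm_coeff :: "(int \<Rightarrow> int) \<Rightarrow> complex \<Rightarrow> complex \<Rightarrow> complex \<Rightarrow> complex \<Rightarrow> complex \<Rightarrow> complex \<Rightarrow> complex" where
  "perm_coeff \<sigma> u v c d z w = of_int (sign \<sigma>) * (u * z) ^ nat (\<sigma> 1 - 1)
     * (if \<sigma> 3 = 1 then v / d else 1) * (if \<sigma> 1 = 3 then c / u else 1) * (d * w) ^ nat (3 - \<sigma> 3)"

lemma PhiS_eq_sum_perm_coeff: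
  "PhiS n m u v c d z w q = (\<Sum>\<sigma>\<in>{\<sigma>. \<sigma> permutes {1, 2, 3}}.
     perm_coeff \<sigma> u v c d z w * Phi0 n m (\<sigma> 1 - 1) (\<sigma> 2 - 2) (\<sigma> 3 - 3) (z / q) (w / q) q)"
  unfolding PhiS_def perm_coeff_def ..

lemma perm_coeff_scale:
  assumes "z \<noteq> 0" and "w \<noteq> 0"
  shows "perm_coeff \<sigma> (u * z) (v * w) (c * z) (d * w) z w
       = perm_coeff \<sigma> u v c d z w * (z ^ nat (\<sigma> 1 - 1) * w ^ nat (3 - \<sigma> 3))"
  using assms unfolding perm_coeff_def by (simp add: power_mult_distrib mult_ac)

lemma kernel_sum_PhiS:
  fixes z w q u v c d :: complex and n m :: int
  assumes q0: "q \<noteq> 0" and hq: "\<And>k::nat. k > 0 \<Longrightarrow> q ^ k \<noteq> 1"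
    and z0: "z \<noteq> 0" and w0: "w \<noteq> 0"
    and hz: "\<And>k::int. z \<noteq> q powi k" and hw: "\<And>k::int. w \<noteq> q powi k"
    and hzw: "\<And>k::int. z * w \<noteq> q powi k"
  shows "(\<Sum>r\<in>{0..n}. \<Sum>s\<in>{0..m}. Kker n m r s (z / q) (w / q) q * PhiS r s u v c d z w q)
       = PhiS n m (u * z) (v * w) (c * z) (d * w) z w q"
proof -
  let ?S = "{\<sigma>::int \<Rightarrow> int. \<sigma> permutes {1, 2, 3}}"
  let ?K = "\<lambda>r s. Kker n m r s (z / q) (w / q) q"
  let ?P = "\<lambda>\<sigma> r s. Phi0 r s (\<sigma> 1 - 1) (\<sigma> 2 - 2) (\<sigma> 3 - 3) (z / q) (w / q) q"
  have "(\<Sum>r\<in>{0..n}. \<Sum>s\<in>{0..m}. ?K r s * PhiS r s u v c d z w q)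
      = (\<Sum>r\<in>{0..n}. \<Sum>s\<in>{0..m}. \<Sum>\<sigma>\<in>?S. perm_coeff \<sigma> u v c d z w * (?K r s * ?P \<sigma> r s))"
    unfolding PhiS_eq_sum_perm_coeff by (simp add: sum_distrib_left mult_ac)
  also have "\<dots> = (\<Sum>\<sigma>\<in>?S. \<Sum>r\<in>{0..n}. \<Sum>s\<in>{0..m}. perm_coeff \<sigma> u v c d z w * (?K r s * ?P \<sigma> r s))"
    by (subst sum.swap) (simp only: sum.swap[of _ "{0..m}"])
  also have "\<dots> = (\<Sum>\<sigma>\<in>?S. perm_coeff \<sigma> u v c d z w * (z ^ nat (\<sigma> 1 - 1) * w ^ nat (3 - \<sigma> 3) * ?P \<sigma> n m))"
    by (rule sum.cong[OF refl])
      (simp add: kernel_sum_Phi0_perm[OF _ q0 hq z0 w0 hz hw hzw] flip: sum_distrib_left)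
  also have "\<dots> = PhiS n m (u * z) (v * w) (c * z) (d * w) z w q"
    unfolding PhiS_eq_sum_perm_coeff perm_coeff_scale[OF z0 w0] by (simp add: mult_ac)
  finally show ?thesis .
qed

theorem corollary4p11:
  fixes n m y1 y2 y3 :: int and u v c d z w q :: complex
  assumes "y1 + y2 + y3 = 0"
    and "q \<noteq> 0" and "\<And>k::nat. k > 0 \<Longrightarrow> q ^ k \<noteq> 1"
    and "z \<noteq> 0" and "w \<noteq> 0" and "u \<noteq> 0" and "d \<noteq> 0"
    and "\<And>k::int. z \<noteq> q powi k" and "\<And>k::int. w \<noteq> q powi k"
    and "\<And>k::int. z * w \<noteq> q powi k"
  shows "(\<Sum>r\<in>{y1..n}. \<Sum>s\<in>{y1 + y2..m}.
            Kker n m r s (z / q) (w / q) q * PhiY r s y1 y2 y3 u v c d z w q)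
       = z powi y1 * w powi (y1 + y2)
         * q powi ((y1\<^sup>2 + y2\<^sup>2 + y3\<^sup>2) div 2 - 2 * y1 - y2)
         * PhiY n m y1 y2 y3 (u * z * q powi (y1 - y2)) (v * w * q powi (y2 - y3))
                (c * z * q powi (y1 - y2)) (d * w * q powi (y2 - y3)) z w q"
proof -
  note y = assms(1) and q0 = assms(2) and hq = assms(3) and z0 = assms(4) and w0 = assms(5)
    and hz = assms(8) and hw = assms(9) and hzw = assms(10)
  define z' where "z' = z * q powi (y1 - y2)"
  define w' where "w' = w * q powi (y2 - y3)"
  define D where "D = qpoch z q (y1 - y2) * qpoch w q (y2 - y3) * qpoch (z * w / q) q (y1 - y3)"
  have z'0: "z' \<noteq> 0" and w'0: "w' \<noteq> 0"
    unfolding z'_def w'_def using z0 w0 q0 by auto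
  have hz': "\<And>k. z' \<noteq> q powi k" and hw': "\<And>k. w' \<noteq> q powi k" and hzw': "\<And>k. z' * w' \<noteq> q powi k"
    unfolding z'_def w'_def using powi_avoid_mult[OF q0] powi_avoid_mult_mult[OF q0] hz hw hzw by auto
  have PhiY: "PhiY r s y1 y2 y3 u' v' c' d' z w q = PhiS (r - y1) (s - (y1 + y2)) u' v' c' d' z' w' q / D"
    for r s u' v' c' d'
    unfolding PhiY_def z'_def w'_def D_def by (simp add: diff_diff_eq)
  have "(\<Sum>r\<in>{y1..n}. \<Sum>s\<in>{y1 + y2..m}. Kker n m r s (z / q) (w / q) q * PhiY r s y1 y2 y3 u v c d z w q)
      = shift_factor z w q y1 y2 * (\<Sum>r\<in>{0..n - y1}. \<Sum>s\<in>{0..m - (y1 + y2)}.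
          Kker (n - y1) (m - (y1 + y2)) r s (z' / q) (w' / q) q * (PhiS r s u v c d z' w' q / D))"
    unfolding PhiY z'_def w'_def by (rule kernel_sum_shift[OF y q0 z0 w0])
  also have "\<dots> = shift_factor z w q y1 y2
      * (PhiS (n - y1) (m - (y1 + y2)) (u * z') (v * w') (c * z') (d * w') z' w' q / D)"
    by (simp add: kernel_sum_PhiS[OF q0 hq z'0 w'0 hz' hw' hzw'] flip: sum_divide_distrib)
  also have "\<dots> = shift_factor z w q y1 y2 * PhiY n m y1 y2 y3 (u * z * q powi (y1 - y2))
      (v * w * q powi (y2 - y3)) (c * z * q powi (y1 - y2)) (d * w * q powi (y2 - y3)) z w q"
    unfolding PhiY z'_def w'_def by (simp add: mult.assoc)
  finally show ?thesis
    unfolding shift_factor_eq[OF y q0] .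
qed

end
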